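(* Let $f:\mathbb{R}^n\to\mathbb{R}$ be twice continuously differentiable, $B\in\mathbb{R}^{p\times n}$, $\lambda_1,\lambda_2>0$, $l\le 0\le u$ in $\mathbb{R}^n$, $\Omega=\{x: l\le x\le u\}$, $g(x)=\lambda_1\|Bx\|_0+\lambda_2\|x\|_0+\delta_\Omega(x)$ and $F=f+g$. Then $g$ is prox-regular at every point of its domain $\Omega$. Consequently, the set of stationary points of the problem $\min_{x\in\mathbb{R}^n}F(x)$ (points $x$ with $0\in\partial F(x)$) coincides with its set of $L$-stationary points.
   Context: $\|y\|_0$ is the number of nonzero entries of $y$; $\delta_\Omega$ is the indicator of $\Omega$; $\partial$ denotes the basic (limiting) subdifferential. A function $h:\mathbb{R}^n\to(-\infty,+\infty]$ is prox-regular at $\bar x\in\mathrm{dom}\,h$ for $\bar v\in\partial h(\bar x)$ if $h$ is locally lower semicontinuous at $\bar x$ and there exist $r\ge0,\varepsilon>0$ such that $h(x')\ge h(x)+v^\top(x'-x)-\frac r2\|x'-x\|^2$ for all $\|x'-\bar x\|\le\varepsilon$ whenever $v\in\partial h(x)$, $\|v-\bar v\|<\varepsilon$, $\|x-\bar x\|<\varepsilon$ and $h(x)<h(\bar x)+\varepsilon$; $h$ is prox-regular at $\bar x$ if this holds for all $\bar v\in\partial h(\bar x)$. For $\mu>0$, $\mathrm{prox}_{\mu g}(z)=\arg\min_{x}\{\frac{1}{2\mu}\|x-z\|^2+g(x)\}$. A point $x$ is an $L$-stationary point of $\min F$ if there is $\mu>0$ with $x\in\mathrm{prox}_{\mu^{-1}g}(x-\mu^{-1}\nabla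 f(x))$. *)

theory Defs
  imports "HOL-Analysis.Analysis"
begin

text \<open>Extended-real-valued functions on a Euclidean space are modelled as maps into ereal;
  the value \<infinity> encodes points outside the effective domain.\<close>

definition l0 :: "real ^ 'k \<Rightarrow> real" where
  "l0 x = real (card {i. x $ i \<noteq> 0})"

text \<open>Regular (Frechet) subdifferential, unfolding the liminf definition.\<close>
definition frechet_subdiff :: "('a::euclidean_space \<Rightarrow> ereal) \<Rightarrow> 'a \<Rightarrow> 'a set" where
  "frechet_subdiff h x = {v. \<bar>h x\<bar> \<noteq> \<infinity> \<and>
     (\<forall>e>0. \<exists>d>0. \<forall>x'. norm (x' - x) < d \<longrightarrow>
        h x' \<ge> h x + ereal (inner v (x' - x) - e * norm (x' - x)))}"

definition limiting_subdiff :: "('a::euclidean_space \<Rightarrow> ereal) \<Rightarrow> 'a \<Rightarrow> 'a set" where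
  "limiting_subdiff h x = {v. \<bar>h x\<bar> \<noteq> \<infinity> \<and>
     (\<exists>xs vs. xs \<longlonglongrightarrow> x \<and> (\<lambda>k. h (xs k)) \<longlonglongrightarrow> h x \<and>
        (\<forall>k. vs k \<in> frechet_subdiff h (xs k)) \<and> vs \<longlonglongrightarrow> v)}"

definition locally_lsc_at :: "('a::euclidean_space \<Rightarrow> ereal) \<Rightarrow> 'a \<Rightarrow> bool" where
  "locally_lsc_at h xb \<longleftrightarrow> \<bar>h xb\<bar> \<noteq> \<infinity> \<and>
     (\<exists>e>0. \<forall>\<alpha>::real. ereal \<alpha> \<le> h xb + ereal e \<longrightarrow>
        closed {x. dist x xb \<le> e \<and> h x \<le> ereal \<alpha>})"

definition prox_regular_at_for :: "('a::euclidean_space \<Rightarrow> ereal) \<Rightarrow> 'a \<Rightarrow> 'a \<Rightarrow> bool" where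
  "prox_regular_at_for h xb vb \<longleftrightarrow> locally_lsc_at h xb \<and>
     (\<exists>r\<ge>0. \<exists>e>0. \<forall>x x' v.
        v \<in> limiting_subdiff h x \<and> norm (v - vb) < e \<and> norm (x - xb) < e \<and>
        h x < h xb + ereal e \<and> norm (x' - xb) \<le> e \<longrightarrow>
        h x' \<ge> h x + ereal (inner v (x' - x) - r / 2 * (norm (x' - x))\<^sup>2))"

definition prox_regular_at :: "('a::euclidean_space \<Rightarrow> ereal) \<Rightarrow> 'a \<Rightarrow> bool" where
  "prox_regular_at h xb \<longleftrightarrow> \<bar>h xb\<bar> \<noteq> \<infinity> \<and>
     (\<forall>vb \<in> limiting_subdiff h xb. prox_regular_at_for h xb vb)"

definition prox :: "real \<Rightarrow> ('a::euclidean_space \<Rightarrow> ereal) \<Rightarrow> 'a \<Rightarrow> 'a set" where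
  "prox \<mu> g z = {x. \<forall>y. ereal (1 / (2 * \<mu>) * (norm (x - z))\<^sup>2) + g x
                      \<le> ereal (1 / (2 * \<mu>) * (norm (y - z))\<^sup>2) + g y}"

definition L_stationary :: "('a::euclidean_space \<Rightarrow> 'a) \<Rightarrow> ('a \<Rightarrow> ereal) \<Rightarrow> 'a \<Rightarrow> bool" where
  "L_stationary gradf g x \<longleftrightarrow> (\<exists>\<mu>>0. x \<in> prox (inverse \<mu>) g (x - inverse \<mu> *\<^sub>R gradf x))"

end

theory Submission
  imports Defs
begin

text \<open>Let S(x) be the subspace of vectors y with supp y \<subseteq> supp x and
  supp (B y) \<subseteq> supp (B x). Supports can only grow nearby, so x \<in> S(y) for all y near x.
  Hence g is constant on the face \<Omega> \<inter> S(x), and near x it jumps by at least min lam1 lam2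
  off this face. Consequently every limiting subgradient v of g at x is a normal vector of
  the convex set \<Omega> \<inter> S(x) at x. Conversely, such a normal vector is a proximal subgradient
  with a global constant: near x the jump absorbs the linear term, and far from x a quadratic
  dominates it. So the limiting subdifferential of g is the set of global proximal
  subgradients, which gives prox-regularity with r = 0. Combined with the sum rule for C1
  functions, 0 \<in> \<partial>F(x) holds iff -\<nabla>f(x) is a global proximal subgradient of g,
  which is exactly L-stationarity.\<close>

lemma l0_mono:
  assumes "{i. y $ i \<noteq> 0} \<subseteq> {i. x $ i \<noteq> 0}"
  shows "l0 y \<le> l0 x"
  using assms by (simp add: l0_def card_mono)

lemma l0_strict_mono:
  assumes "{i. y $ i \<noteq> 0} \<subset> {i. x $ i \<noteq> 0}"
  shows "l0 y + 1 \<le> l0 x"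
proof -
  have "card {i. y $ i \<noteq> 0} < card {i. x $ i \<noteq> 0}"
    using assms by (simp add: psubset_card_mono)
  then show ?thesis by (simp add: l0_def)
qed

definition support_space :: "real^'n^'p \<Rightarrow> real^'n \<Rightarrow> (real^'n) set" where
  "support_space B x = {y. {i. y $ i \<noteq> 0} \<subseteq> {i. x $ i \<noteq> 0} \<and>
                           {j. (B *v y) $ j \<noteq> 0} \<subseteq> {j. (B *v x) $ j \<noteq> 0}}"

lemma support_space_self: "x \<in> support_space B x"
  by (simp add: support_space_def)

lemma support_space_trans:
  "y \<in> support_space B x \<Longrightarrow> x \<in> support_space B z \<Longrightarrow> y \<in> support_space B z"
  unfolding support_space_def by blast

lemma subspace_support_space: "subspace (support_space B x)"
  unfolding subspace_def support_space_def
  by (auto simp: subset_iff matrix_vector_right_distrib matrix_vector_mult_scaleR)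
    (metis add.right_neutral)+

lemma eventually_nhds_support_space: "\<forall>\<^sub>F y in nhds x. x \<in> support_space B y"
proof -
  have entries: "\<forall>\<^sub>F y in nhds x. x $ i \<noteq> 0 \<longrightarrow> y $ i \<noteq> 0" for i
  proof (cases "x $ i = 0")
    case False
    have "((\<lambda>y. y $ i) \<longlongrightarrow> x $ i) (nhds x)"
      by (intro tendsto_intros filterlim_ident)
    then show ?thesis
      using tendsto_imp_eventually_ne False by (auto elim: eventually_mono)
  qed simp
  have image_entries: "\<forall>\<^sub>F y in nhds x. (B *v x) $ j \<noteq> 0 \<longrightarrow> (B *v y) $ j \<noteq> 0" for j
  proof (cases "(B *v x) $ j = 0")
    case False
    have "((\<lambda>y. (B *v y) $ j) \<longlongrightarrow> (B *v x) $ j) (nhds x)"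
      by (intro tendsto_intros bounded_linear.tendsto[OF matrix_vector_mul_bounded_linear] filterlim_ident)
    then show ?thesis
      using tendsto_imp_eventually_ne False by (auto elim: eventually_mono)
  qed simp
  show ?thesis
    unfolding support_space_def subset_iff mem_Collect_eq
    by (intro eventually_conj eventually_all_finite entries image_entries)
qed

definition global_prox_subdiff :: "('a::euclidean_space \<Rightarrow> ereal) \<Rightarrow> 'a \<Rightarrow> 'a set" where
  "global_prox_subdiff h x = {v. \<exists>\<mu>>0. \<forall>y.
     h x + ereal (inner v (y - x) - \<mu> / 2 * (norm (y - x))\<^sup>2) \<le> h y}"

lemma frechet_subdiff_subset_limiting: "frechet_subdiff h x \<subseteq> limiting_subdiff h x"
proof
  fix v assume "v \<in> frechet_subdiff h x"
  then show "v \<in> limiting_subdiff h x"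
    unfolding limiting_subdiff_def
    by (intro CollectI conjI exI[of _ "\<lambda>_. x"] exI[of _ "\<lambda>_. v"]) (auto simp: frechet_subdiff_def)
qed

lemma global_prox_subdiff_subset_frechet:
  assumes "\<bar>h x\<bar> \<noteq> \<infinity>"
  shows "global_prox_subdiff h x \<subseteq> frechet_subdiff h x"
proof
  fix v assume "v \<in> global_prox_subdiff h x"
  then obtain \<mu> where "\<mu> > 0" and prox:
    "\<And>y. h x + ereal (inner v (y - x) - \<mu> / 2 * (norm (y - x))\<^sup>2) \<le> h y"
    by (auto simp: global_prox_subdiff_def)
  show "v \<in> frechet_subdiff h x"
    unfolding frechet_subdiff_def
  proof (intro CollectI conjI assms allI impI)
    fix e :: real assume "e > 0"
    show "\<exists>d>0. \<forall>y. norm (y - x) < d \<longrightarrow> h x + ereal (inner v (y - x) - e * norm (y - x)) \<le> h y"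
    proof (intro exI[of _ "2 * e / \<mu>"] conjI allI impI)
      show "2 * e / \<mu> > 0" using \<open>e > 0\<close> \<open>\<mu> > 0\<close> by simp
      fix y assume "norm (y - x) < 2 * e / \<mu>"
      then have "\<mu> / 2 * norm (y - x) \<le> e" using \<open>\<mu> > 0\<close> by (simp add: field_simps)
      then have "\<mu> / 2 * (norm (y - x))\<^sup>2 \<le> e * norm (y - x)"
        by (metis mult.assoc mult_right_mono norm_ge_zero power2_eq_square)
      then have "h x + ereal (inner v (y - x) - e * norm (y - x))
               \<le> h x + ereal (inner v (y - x) - \<mu> / 2 * (norm (y - x))\<^sup>2)"
        by (intro add_left_mono) simp
      then show "h x + ereal (inner v (y - x) - e * norm (y - x)) \<le> h y"
        using prox order_trans by blast
    qed
  qed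
qed

lemma frechet_subdiff_inner_nonpos:
  assumes v: "v \<in> frechet_subdiff h x"
    and descent: "\<And>t. 0 < t \<Longrightarrow> t \<le> 1 \<Longrightarrow> h (x + t *\<^sub>R d) \<le> h x"
  shows "inner v d \<le> 0"
proof (rule ccontr)
  assume "\<not> inner v d \<le> 0"
  then have pos: "inner v d > 0" and "d \<noteq> 0" by auto
  define e where "e = inner v d / (2 * norm d)"
  have "e > 0" using pos \<open>d \<noteq> 0\<close> by (simp add: e_def)
  obtain a where ha: "h x = ereal a"
    using v by (cases "h x") (auto simp: frechet_subdiff_def)
  obtain \<delta> where "\<delta> > 0" and \<delta>: "\<And>y. norm (y - x) < \<delta> \<Longrightarrow>
      h x + ereal (inner v (y - x) - e * norm (y - x)) \<le> h y"
    using v \<open>e > 0\<close> unfolding frechet_subdiff_def by blast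
  define t where "t = min 1 (\<delta> / (2 * norm d))"
  have "t \<le> \<delta> / (2 * norm d)" by (simp add: t_def)
  then have "t * norm d \<le> \<delta> / 2" using \<open>d \<noteq> 0\<close> by (simp add: field_simps)
  then have t: "0 < t" "t \<le> 1" "t * norm d < \<delta>"
    using \<open>\<delta> > 0\<close> \<open>d \<noteq> 0\<close> by (auto simp: t_def)
  have "h x + ereal (t * inner v d - e * (t * norm d)) \<le> h x"
    using \<delta>[of "x + t *\<^sub>R d"] descent[OF t(1,2)] t by (simp add: order_trans)
  then have "t * inner v d - e * (t * norm d) \<le> 0" by (simp add: ha)
  moreover have "e * (t * norm d) = t * inner v d / 2"
    using \<open>d \<noteq> 0\<close> by (simp add: e_def field_simps)
  ultimately show False using mult_pos_pos[OF t(1) pos] by linarith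
qed

lemma frechet_subdiff_add_differentiableD:
  fixes h :: "'a::euclidean_space \<Rightarrow> real"
  assumes h: "(h has_derivative (\<lambda>d. inner G d)) (at x)"
    and w: "w \<in> frechet_subdiff (\<lambda>y. ereal (h y) + g y) x"
  shows "w - G \<in> frechet_subdiff g x"
proof -
  obtain a where ga: "g x = ereal a"
    using w by (cases "g x") (auto simp: frechet_subdiff_def)
  have "\<exists>\<delta>>0. \<forall>y. norm (y - x) < \<delta> \<longrightarrow> g x + ereal (inner (w - G) (y - x) - e * norm (y - x)) \<le> g y"
    if "e > 0" for e
  proof -
    obtain \<delta>1 where "\<delta>1 > 0" and \<delta>1: "\<And>y. norm (y - x) < \<delta>1 \<Longrightarrow>
        ereal (h x) + g x + ereal (inner w (y - x) - e / 2 * norm (y - x)) \<le> ereal (h y) + g y"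
      using w \<open>e > 0\<close> unfolding frechet_subdiff_def mem_Collect_eq by (meson half_gt_zero)
    obtain \<delta>2 where "\<delta>2 > 0" and \<delta>2: "\<And>y. norm (y - x) < \<delta>2 \<Longrightarrow>
        norm (h y - h x - inner G (y - x)) \<le> e / 2 * norm (y - x)"
      using h \<open>e > 0\<close> unfolding has_derivative_at_alt by (meson half_gt_zero)
    have "g x + ereal (inner (w - G) (y - x) - e * norm (y - x)) \<le> g y"
      if "norm (y - x) < min \<delta>1 \<delta>2" for y
    proof -
      have sum: "ereal (h x + a + (inner w (y - x) - e / 2 * norm (y - x))) \<le> ereal (h y) + g y"
        using \<delta>1[of y] that ga by simp
      have "\<bar>h y - h x - inner G (y - x)\<bar> \<le> e / 2 * norm (y - x)"
        using \<delta>2[of y] that by simp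
      then have "h y - h x - inner G (y - x) \<le> e / 2 * norm (y - x)"
        by linarith
      with sum show ?thesis
        by (cases "g y") (auto simp: ga inner_diff_left)
    qed
    then show ?thesis using \<open>\<delta>1 > 0\<close> \<open>\<delta>2 > 0\<close> by (intro exI[of _ "min \<delta>1 \<delta>2"]) auto
  qed
  then show ?thesis by (simp add: frechet_subdiff_def ga)
qed

lemma ereal_uminus_add_cancel: "ereal (- a) + (ereal a + z) = z"
  by (cases z) simp_all

lemma limiting_subdiff_add_C1D:
  fixes h :: "'a::euclidean_space \<Rightarrow> real"
  assumes h: "\<And>y. (h has_derivative (\<lambda>d. inner (G y) d)) (at y)" and G: "isCont G x"
    and w: "w \<in> limiting_subdiff (\<lambda>y. ereal (h y) + g y) x"
  shows "w - G x \<in> limiting_subdiff g x"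
proof -
  have fin: "\<bar>ereal (h x) + g x\<bar> \<noteq> \<infinity>" and
    "\<exists>xs vs. xs \<longlonglongrightarrow> x \<and> (\<lambda>k. ereal (h (xs k)) + g (xs k)) \<longlonglongrightarrow> ereal (h x) + g x \<and>
        (\<forall>k. vs k \<in> frechet_subdiff (\<lambda>y. ereal (h y) + g y) (xs k)) \<and> vs \<longlonglongrightarrow> w"
    using w by (simp_all add: limiting_subdiff_def)
  then obtain xs vs where xs: "xs \<longlonglongrightarrow> x"
    and sum_lim: "(\<lambda>k. ereal (h (xs k)) + g (xs k)) \<longlonglongrightarrow> ereal (h x) + g x"
    and vs: "\<And>k. vs k \<in> frechet_subdiff (\<lambda>y. ereal (h y) + g y) (xs k)" and "vs \<longlonglongrightarrow> w"
    by blast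
  have "isCont h x" using h by (rule has_derivative_continuous)
  then have "(\<lambda>k. ereal (- h (xs k))) \<longlonglongrightarrow> ereal (- h x)"
    by (intro tendsto_ereal tendsto_minus isCont_tendsto_compose[OF _ xs])
  then have "(\<lambda>k. ereal (- h (xs k)) + (ereal (h (xs k)) + g (xs k)))
      \<longlonglongrightarrow> ereal (- h x) + (ereal (h x) + g x)"
    using tendsto_add_ereal[OF _ fin _ sum_lim] by simp
  then have "(\<lambda>k. g (xs k)) \<longlonglongrightarrow> g x"
    by (simp only: ereal_uminus_add_cancel)
  moreover have "(\<lambda>k. vs k - G (xs k)) \<longlonglongrightarrow> w - G x"
    by (intro tendsto_intros \<open>vs \<longlonglongrightarrow> w\<close> isCont_tendsto_compose[OF G xs])
  moreover have "\<bar>g x\<bar> \<noteq> \<infinity>" using fin by (cases "g x") auto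
  ultimately show ?thesis
    unfolding limiting_subdiff_def mem_Collect_eq
    by (intro conjI exI[of _ xs] exI[of _ "\<lambda>k. vs k - G (xs k)"] xs allI
        frechet_subdiff_add_differentiableD[OF h vs])
qed

lemma limiting_subdiff_add_C1:
  fixes h :: "'a::euclidean_space \<Rightarrow> real"
  assumes h: "\<And>y. (h has_derivative (\<lambda>d. inner (G y) d)) (at y)" and G: "isCont G x"
  shows "w \<in> limiting_subdiff (\<lambda>y. ereal (h y) + g y) x \<longleftrightarrow> w - G x \<in> limiting_subdiff g x"
proof
  \<comment> \<open>apply the forward direction to -h and the function h + g\<close>
  assume "w - G x \<in> limiting_subdiff g x"
  moreover have "(\<lambda>y. ereal (- h y) + (ereal (h y) + g y)) = g"
    by (simp add: ereal_uminus_add_cancel)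
  moreover have "((\<lambda>y. - h y) has_derivative (\<lambda>d. inner (- G y) d)) (at y)" for y
    using has_derivative_minus[OF h[of y]] by simp
  moreover have "isCont (\<lambda>y. - G y) x" using G by (intro continuous_intros)
  ultimately show "w \<in> limiting_subdiff (\<lambda>y. ereal (h y) + g y) x"
    using limiting_subdiff_add_C1D[of "\<lambda>y. - h y" "\<lambda>y. - G y" x "w - G x" "\<lambda>y. ereal (h y) + g y"]
    by simp
qed (rule limiting_subdiff_add_C1D[OF h G])

lemma prox_gradient_step_iff:
  fixes g :: "'a::euclidean_space \<Rightarrow> ereal"
  assumes "\<mu> > 0"
  shows "x \<in> prox (inverse \<mu>) g (x - inverse \<mu> *\<^sub>R G) \<longleftrightarrow>
    (\<forall>y. g x + ereal (inner (- G) (y - x) - \<mu> / 2 * (norm (y - x))\<^sup>2) \<le> g y)"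
proof -
  define c where "c = 1 / (2 * inverse \<mu>) * (norm (x - (x - inverse \<mu> *\<^sub>R G)))\<^sup>2"
  have expand: "1 / (2 * inverse \<mu>) * (norm (y - (x - inverse \<mu> *\<^sub>R G)))\<^sup>2
      = c + (inner G (y - x) + \<mu> / 2 * (norm (y - x))\<^sup>2)" for y
    using assms unfolding c_def power2_norm_eq_inner
    by (simp add: inner_diff_left inner_diff_right inner_add_left inner_add_right inner_commute field_simps)
  have shift: "ereal c + g x \<le> ereal (c + q) + g y \<longleftrightarrow> g x + ereal (- q) \<le> g y" for q y
    by (cases "g x"; cases "g y") auto
  have "ereal c + g x \<le> ereal (1 / (2 * inverse \<mu>) * (norm (y - (x - inverse \<mu> *\<^sub>R G)))\<^sup>2) + g y
      \<longleftrightarrow> g x + ereal (inner (- G) (y - x) - \<mu> / 2 * (norm (y - x))\<^sup>2) \<le> g y" for y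
    unfolding expand shift by (simp add: inner_minus_left)
  then show ?thesis
    by (simp add: prox_def c_def)
qed

lemma L_stationary_iff_global_prox_subdiff:
  "L_stationary gradf g x \<longleftrightarrow> - gradf x \<in> global_prox_subdiff g x"
  by (auto simp: L_stationary_def prox_gradient_step_iff global_prox_subdiff_def)

lemma affine_le_quadratic_beyond:
  fixes a b r s :: real
  assumes "0 < r" "r \<le> s" "0 \<le> a" "0 \<le> b"
  shows "a * s + b \<le> (a * r + b) / r\<^sup>2 * s\<^sup>2"
proof -
  have q: "1 \<le> s / r" using assms by simp
  have "a * s * 1 \<le> a * s * (s / r)"
    using assms by (intro mult_left_mono q) simp
  moreover have "b * 1 \<le> b * (s / r)\<^sup>2"
    using assms by (intro mult_left_mono one_le_power q) simp
  moreover have "(a * r + b) / r\<^sup>2 * s\<^sup>2 = a * s * (s / r) + b * (s / r)\<^sup>2"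
    using assms by (simp add: field_simps power2_eq_square)
  ultimately show ?thesis by linarith
qed

locale l0_box_penalty =
  fixes B :: "real^'n^'p" and lam1 lam2 :: real and l u :: "real^'n"
    and \<Omega> :: "(real^'n) set" and g :: "real^'n \<Rightarrow> ereal"
  assumes lam1_pos: "lam1 > 0" and lam2_pos: "lam2 > 0"
    and box_contains_0: "\<And>i. l $ i \<le> 0 \<and> 0 \<le> u $ i"
    and Omega_eq: "\<Omega> = {x. \<forall>i. l $ i \<le> x $ i \<and> x $ i \<le> u $ i}"
    and g_eq: "\<And>x. g x = (if x \<in> \<Omega> then ereal (lam1 * l0 (B *v x) + lam2 * l0 x) else \<infinity>)"
begin

definition penalty :: "real^'n \<Rightarrow> real" where
  "penalty x = lam1 * l0 (B *v x) + lam2 * l0 x"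

definition jump :: real where
  "jump = min lam1 lam2"

lemma jump_pos: "jump > 0"
  using lam1_pos lam2_pos by (simp add: jump_def)

lemma g_in_Omega [simp]: "x \<in> \<Omega> \<Longrightarrow> g x = ereal (penalty x)"
  by (simp add: g_eq penalty_def)

lemma g_notin_Omega [simp]: "x \<notin> \<Omega> \<Longrightarrow> g x = \<infinity>"
  by (simp add: g_eq)

lemma g_finite_iff: "\<bar>g x\<bar> \<noteq> \<infinity> \<longleftrightarrow> x \<in> \<Omega>"
  by (cases "x \<in> \<Omega>") simp_all

lemma Omega_cbox: "\<Omega> = cbox l u"
  by (auto simp: Omega_eq mem_box_cart)

lemma zero_in_Omega: "0 \<in> \<Omega>"
  using box_contains_0 by (simp add: Omega_eq)

lemma penalty_nonneg: "0 \<le> penalty x"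
  using lam1_pos lam2_pos by (simp add: penalty_def l0_def)

lemma g_nonneg: "0 \<le> g x"
  by (cases "x \<in> \<Omega>") (simp_all add: penalty_nonneg)

lemma penalty_mono: "y \<in> support_space B x \<Longrightarrow> penalty y \<le> penalty x"
  unfolding support_space_def penalty_def
  using lam1_pos lam2_pos by (auto intro!: add_mono mult_left_mono l0_mono)

lemma penalty_jump:
  assumes "x \<in> support_space B y" and "y \<notin> support_space B x"
  shows "penalty x + jump \<le> penalty y"
proof -
  have sub: "{i. x $ i \<noteq> 0} \<subseteq> {i. y $ i \<noteq> 0}"
    "{j. (B *v x) $ j \<noteq> 0} \<subseteq> {j. (B *v y) $ j \<noteq> 0}"
    using assms(1) by (auto simp: support_space_def)
  then have l0_le: "lam2 * l0 x \<le> lam2 * l0 y" "lam1 * l0 (B *v x) \<le> lam1 * l0 (B *v y)"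
    using lam1_pos lam2_pos by (simp_all add: l0_mono)
  from assms(2) sub consider
      "{i. x $ i \<noteq> 0} \<subset> {i. y $ i \<noteq> 0}"
    | "{j. (B *v x) $ j \<noteq> 0} \<subset> {j. (B *v y) $ j \<noteq> 0}"
    unfolding support_space_def mem_Collect_eq by (metis psubsetI subset_refl)
  then show ?thesis
  proof cases
    case 1
    then have "lam2 * (l0 x + 1) \<le> lam2 * l0 y"
      using lam2_pos by (simp add: l0_strict_mono)
    moreover have "jump \<le> lam2" by (simp add: jump_def)
    ultimately show ?thesis using l0_le by (simp add: penalty_def algebra_simps)
  next
    case 2
    then have "lam1 * (l0 (B *v x) + 1) \<le> lam1 * l0 (B *v y)"
      using lam1_pos by (simp add: l0_strict_mono)
    moreover have "jump \<le> lam1" by (simp add: jump_def)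
    ultimately show ?thesis using l0_le by (simp add: penalty_def algebra_simps)
  qed
qed

lemma g_mono:
  assumes "x \<in> \<Omega>" and "x \<in> support_space B y"
  shows "g x \<le> g y"
  using assms by (cases "y \<in> \<Omega>") (simp_all add: penalty_mono)

lemma in_support_space_of_g_less:
  assumes "xb \<in> \<Omega>" and "xb \<in> support_space B x" and "g x < g xb + ereal jump"
  shows "x \<in> \<Omega> \<inter> support_space B xb"
proof -
  have "x \<in> \<Omega>" using assms(1,3) by (cases "x \<in> \<Omega>") auto
  moreover have "x \<in> support_space B xb"
  proof (rule ccontr)
    assume "x \<notin> support_space B xb"
    with penalty_jump[OF assms(2)] have "penalty xb + jump \<le> penalty x" .
    with assms(1,3) \<open>x \<in> \<Omega>\<close> show False by simp
  qed
  ultimately show ?thesis by blast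
qed

lemma eventually_nhds_g_ge: "\<forall>\<^sub>F y in nhds x. g x \<le> g y"
proof (cases "x \<in> \<Omega>")
  case True
  show ?thesis
    using eventually_nhds_support_space[of x B] by (rule eventually_mono) (rule g_mono[OF True])
next
  case False
  have "open (- \<Omega>)" by (simp add: Omega_cbox open_Compl closed_cbox)
  then have "\<forall>\<^sub>F y in nhds x. y \<in> - \<Omega>"
    by (rule eventually_nhds_in_open) (use False in simp)
  with False show ?thesis by (auto elim: eventually_mono)
qed

lemma closed_sublevel_g: "closed {y. g y \<le> ereal \<alpha>}"
proof -
  have "open {y. ereal \<alpha> < g y}"
  proof (rule Topological_Spaces.openI)
    fix y assume "y \<in> {y. ereal \<alpha> < g y}"
    obtain T where "open T" "y \<in> T" and ge: "\<And>z. z \<in> T \<Longrightarrow> g y \<le> g z"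
      using eventually_nhds_g_ge[of y] unfolding eventually_nhds by blast
    have "T \<subseteq> {y. ereal \<alpha> < g y}"
      using \<open>y \<in> {y. ereal \<alpha> < g y}\<close> ge by (auto intro: less_le_trans)
    with \<open>open T\<close> \<open>y \<in> T\<close> show "\<exists>T. open T \<and> y \<in> T \<and> T \<subseteq> {y. ereal \<alpha> < g y}"
      by blast
  qed
  moreover have "{y. g y \<le> ereal \<alpha>} = - {y. ereal \<alpha> < g y}" by auto
  ultimately show ?thesis by (simp add: closed_Compl)
qed

lemma locally_lsc_at_g: "x \<in> \<Omega> \<Longrightarrow> locally_lsc_at g x"
  unfolding locally_lsc_at_def
proof (intro conjI exI[of _ 1] allI impI)
  fix \<alpha> :: real
  have "{y. dist y x \<le> 1 \<and> g y \<le> ereal \<alpha>} = cball x 1 \<inter> {y. g y \<le> ereal \<alpha>}"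
    by (auto simp: dist_commute)
  then show "closed {y. dist y x \<le> 1 \<and> g y \<le> ereal \<alpha>}"
    by (simp add: closed_Int closed_sublevel_g)
qed (simp_all add: g_finite_iff)

lemma frechet_subdiff_g_normal:
  assumes v: "v \<in> frechet_subdiff g x" and y: "y \<in> \<Omega> \<inter> support_space B x"
  shows "inner v (y - x) \<le> 0"
proof (rule frechet_subdiff_inner_nonpos[OF v])
  have "x \<in> \<Omega>" using v by (simp add: frechet_subdiff_def g_finite_iff)
  have convex: "convex (\<Omega> \<inter> support_space B x)"
    by (simp add: Omega_cbox convex_Int convex_box subspace_imp_convex subspace_support_space)
  fix t :: real assume "0 < t" "t \<le> 1"
  have "x + t *\<^sub>R (y - x) = (1 - t) *\<^sub>R x + t *\<^sub>R y" by (simp add: algebra_simps)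
  also have "\<dots> \<in> \<Omega> \<inter> support_space B x"
    using convex_alt[THEN iffD1, OF convex, rule_format, of x y t]
      \<open>x \<in> \<Omega>\<close> support_space_self[of x B] y \<open>0 < t\<close> \<open>t \<le> 1\<close> by simp
  finally show "g (x + t *\<^sub>R (y - x)) \<le> g x"
    using \<open>x \<in> \<Omega>\<close> by (simp add: penalty_mono)
qed

lemma limiting_subdiff_g_normal:
  assumes v: "v \<in> limiting_subdiff g x" and y: "y \<in> \<Omega> \<inter> support_space B x"
  shows "inner v (y - x) \<le> 0"
proof -
  have "\<exists>xs vs. xs \<longlonglongrightarrow> x \<and> (\<lambda>k. g (xs k)) \<longlonglongrightarrow> g x \<and>
      (\<forall>k. vs k \<in> frechet_subdiff g (xs k)) \<and> vs \<longlonglongrightarrow> v"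
    using v by (simp add: limiting_subdiff_def)
  then obtain xs vs where xs: "xs \<longlonglongrightarrow> x" and vs: "\<And>k. vs k \<in> frechet_subdiff g (xs k)"
    and "vs \<longlonglongrightarrow> v"
    by blast
  have "\<forall>\<^sub>F k in sequentially. x \<in> support_space B (xs k)"
    using eventually_nhds_support_space xs by (rule eventually_compose_filterlim)
  then have "\<forall>\<^sub>F k in sequentially. inner (vs k) (y - xs k) \<le> 0"
    using y by (auto intro: frechet_subdiff_g_normal[OF vs] support_space_trans elim!: eventually_mono)
  moreover have "(\<lambda>k. inner (vs k) (y - xs k)) \<longlonglongrightarrow> inner v (y - x)"
    by (intro tendsto_intros \<open>vs \<longlonglongrightarrow> v\<close> xs)
  ultimately show ?thesis
    using tendsto_le[OF trivial_limit_sequentially tendsto_const] by blast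
qed

lemma subgradient_inequality_of_normal:
  assumes "x \<in> \<Omega>" and normal: "\<And>y. y \<in> \<Omega> \<inter> support_space B x \<Longrightarrow> inner v (y - x) \<le> 0"
    and "x \<in> support_space B y" and "inner v (y - x) \<le> jump"
  shows "g x + ereal (inner v (y - x)) \<le> g y"
proof (cases "y \<in> \<Omega>")
  case True
  show ?thesis
  proof (cases "y \<in> support_space B x")
    case True
    then have "inner v (y - x) \<le> 0" using normal \<open>y \<in> \<Omega>\<close> by blast
    moreover have "penalty y = penalty x"
      using True assms(3) by (simp add: antisym penalty_mono)
    ultimately show ?thesis using \<open>x \<in> \<Omega>\<close> \<open>y \<in> \<Omega>\<close> by simp
  next
    case False
    with penalty_jump[OF assms(3)] assms(4) \<open>x \<in> \<Omega>\<close> \<open>y \<in> \<Omega>\<close> show ?thesis by simp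
  qed
qed simp

lemma limiting_subdiff_g_subgradient_inequality:
  assumes v: "v \<in> limiting_subdiff g x"
    and "x \<in> support_space B y" and "inner v (y - x) \<le> jump"
  shows "g x + ereal (inner v (y - x)) \<le> g y"
proof -
  have "x \<in> \<Omega>" using v by (simp add: limiting_subdiff_def g_finite_iff)
  then show ?thesis
    using limiting_subdiff_g_normal[OF v] assms(2,3) by (rule subgradient_inequality_of_normal)
qed

lemma global_prox_subdiff_g_of_normal:
  assumes "x \<in> \<Omega>" and normal: "\<And>y. y \<in> \<Omega> \<inter> support_space B x \<Longrightarrow> inner v (y - x) \<le> 0"
  shows "v \<in> global_prox_subdiff g x"
proof -
  obtain \<rho> where "\<rho> > 0" and near: "\<And>y. dist y x < \<rho> \<Longrightarrow> x \<in> support_space B y"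
    using eventually_nhds_support_space[of x B] unfolding eventually_nhds_metric by blast
  \<comment> \<open>within distance r the jump of g absorbs the linear term; beyond r the quadratic term
    dominates both the linear term and g x\<close>
  define r where "r = min \<rho> (jump / (norm v + 1))"
  define c where "c = (norm v * r + (penalty x + 1)) / r\<^sup>2"
  define \<mu> where "\<mu> = 2 * c"
  have "norm v + 1 > 0" by (simp add: add_nonneg_pos)
  then have "r > 0" using \<open>\<rho> > 0\<close> jump_pos by (simp add: r_def)
  have "norm v * r \<le> (norm v + 1) * (jump / (norm v + 1))"
    using \<open>r > 0\<close> by (intro mult_mono) (auto simp: r_def)
  then have "norm v * r \<le> jump" using \<open>norm v + 1 > 0\<close> by simp
  have "norm v * r + (penalty x + 1) > 0"
    using \<open>r > 0\<close> penalty_nonneg[of x] by (simp add: add_nonneg_pos)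
  then have "\<mu> > 0" using \<open>r > 0\<close> by (simp add: \<mu>_def c_def)
  have "g x + ereal (inner v (y - x) - \<mu> / 2 * (norm (y - x))\<^sup>2) \<le> g y" for y
  proof (cases "norm (y - x) < r")
    case True
    have "inner v (y - x) \<le> norm v * norm (y - x)" by (rule norm_cauchy_schwarz)
    also have "\<dots> \<le> norm v * r" using True by (simp add: mult_left_mono)
    finally have "inner v (y - x) \<le> jump" using \<open>norm v * r \<le> jump\<close> by linarith
    have "g x + ereal (inner v (y - x) - \<mu> / 2 * (norm (y - x))\<^sup>2) \<le> g x + ereal (inner v (y - x))"
      using \<open>\<mu> > 0\<close> by (intro add_left_mono) simp
    also have "\<dots> \<le> g y"
      using assms near[of y] True \<open>inner v (y - x) \<le> jump\<close>
      by (intro subgradient_inequality_of_normal) (auto simp: dist_norm r_def)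
    finally show ?thesis .
  next
    case False
    then have "r \<le> norm (y - x)" by simp
    then have "norm v * norm (y - x) + (penalty x + 1)
        \<le> (norm v * r + (penalty x + 1)) / r\<^sup>2 * (norm (y - x))\<^sup>2"
      using \<open>r > 0\<close> penalty_nonneg[of x] by (intro affine_le_quadratic_beyond) auto
    also have "(norm v * r + (penalty x + 1)) / r\<^sup>2 = \<mu> / 2"
      unfolding c_def[symmetric] \<mu>_def by simp
    finally have "norm v * norm (y - x) + (penalty x + 1) \<le> \<mu> / 2 * (norm (y - x))\<^sup>2" .
    moreover have "inner v (y - x) \<le> norm v * norm (y - x)" by (rule norm_cauchy_schwarz)
    ultimately have "g x + ereal (inner v (y - x) - \<mu> / 2 * (norm (y - x))\<^sup>2) \<le> 0"
      using \<open>x \<in> \<Omega>\<close> by (simp add: zero_ereal_def)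
    then show ?thesis using g_nonneg[of y] by (rule order_trans)
  qed
  with \<open>\<mu> > 0\<close> show ?thesis by (auto simp: global_prox_subdiff_def)
qed

lemma limiting_subdiff_g_eq_global_prox_subdiff:
  "limiting_subdiff g x = global_prox_subdiff g x"
proof (intro equalityI subsetI)
  fix v assume v: "v \<in> limiting_subdiff g x"
  then have "x \<in> \<Omega>" by (simp add: limiting_subdiff_def g_finite_iff)
  with v show "v \<in> global_prox_subdiff g x"
    by (intro global_prox_subdiff_g_of_normal limiting_subdiff_g_normal)
next
  fix v assume v: "v \<in> global_prox_subdiff g x"
  then obtain \<mu> where "\<And>y. g x + ereal (inner v (y - x) - \<mu> / 2 * (norm (y - x))\<^sup>2) \<le> g y"
    by (auto simp: global_prox_subdiff_def)
  from this[of 0] have "x \<in> \<Omega>"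
    using zero_in_Omega by (cases "x \<in> \<Omega>") auto
  then have "\<bar>g x\<bar> \<noteq> \<infinity>" by (simp add: g_finite_iff)
  then have "v \<in> frechet_subdiff g x"
    by (rule subsetD[OF global_prox_subdiff_subset_frechet v])
  then show "v \<in> limiting_subdiff g x"
    using frechet_subdiff_subset_limiting by blast
qed

lemma limiting_subdiff_g_inequality_near:
  assumes "xb \<in> \<Omega>"
  obtains e where "e > 0"
    and "\<And>x x' v. v \<in> limiting_subdiff g x \<Longrightarrow> norm (v - vb) < e \<Longrightarrow> norm (x - xb) < e \<Longrightarrow>
      g x < g xb + ereal e \<Longrightarrow> norm (x' - xb) \<le> e \<Longrightarrow> g x + ereal (inner v (x' - x)) \<le> g x'"
proof -
  obtain \<rho> where "\<rho> > 0" and near: "\<And>y. dist y xb < \<rho> \<Longrightarrow> xb \<in> support_space B y"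
    using eventually_nhds_support_space[of xb B] unfolding eventually_nhds_metric by blast
  define K where "K = norm vb + 1"
  define e where "e = min (\<rho> / 2) (min 1 (jump / (4 * K)))"
  have "K \<ge> 1" by (simp add: K_def)
  then have "e > 0" using \<open>\<rho> > 0\<close> jump_pos by (simp add: e_def)
  have "e < \<rho>" "e \<le> 1" "e \<le> jump / (4 * K)" using \<open>\<rho> > 0\<close> by (simp_all add: e_def)
  then have e_jump: "K * (2 * e) \<le> jump / 2" using \<open>K \<ge> 1\<close> by (simp add: field_simps)
  moreover have "2 * e \<le> K * (2 * e)" using \<open>K \<ge> 1\<close> \<open>e > 0\<close> by simp
  ultimately have "e < jump" using \<open>e > 0\<close> by linarith
  show ?thesis
  proof (rule that[OF \<open>e > 0\<close>])
    fix x x' v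
    assume v: "v \<in> limiting_subdiff g x" and "norm (v - vb) < e" and "norm (x - xb) < e"
      and gx: "g x < g xb + ereal e" and "norm (x' - xb) \<le> e"
    have "xb \<in> support_space B x"
      using near \<open>norm (x - xb) < e\<close> \<open>e < \<rho>\<close> by (simp add: dist_norm)
    moreover have "g x < g xb + ereal jump"
      using gx \<open>e < jump\<close> \<open>xb \<in> \<Omega>\<close> by (cases "g x") auto
    ultimately have "x \<in> support_space B xb"
      using in_support_space_of_g_less[OF assms] by blast
    moreover have "xb \<in> support_space B x'"
      using near \<open>norm (x' - xb) \<le> e\<close> \<open>e < \<rho>\<close> by (simp add: dist_norm)
    ultimately have "x \<in> support_space B x'" by (rule support_space_trans)
    have "norm v \<le> K"
      using \<open>norm (v - vb) < e\<close> \<open>e \<le> 1\<close> norm_triangle_ineq2[of v vb] by (simp add: K_def)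
    have "norm (x' - x) \<le> norm (x' - xb) + norm (x - xb)"
      using norm_triangle_ineq[of "x' - xb" "xb - x"] by (simp add: norm_minus_commute)
    then have "norm (x' - x) \<le> 2 * e"
      using \<open>norm (x' - xb) \<le> e\<close> \<open>norm (x - xb) < e\<close> by linarith
    have "inner v (x' - x) \<le> norm v * norm (x' - x)" by (rule norm_cauchy_schwarz)
    also have "\<dots> \<le> K * (2 * e)"
      using \<open>norm v \<le> K\<close> \<open>norm (x' - x) \<le> 2 * e\<close> \<open>K \<ge> 1\<close> by (intro mult_mono) auto
    finally have "inner v (x' - x) \<le> jump" using e_jump jump_pos by linarith
    with v \<open>x \<in> support_space B x'\<close> show "g x + ereal (inner v (x' - x)) \<le> g x'"
      by (rule limiting_subdiff_g_subgradient_inequality)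
  qed
qed

lemma prox_regular_at_g:
  assumes "x \<in> \<Omega>"
  shows "prox_regular_at g x"
  unfolding prox_regular_at_def prox_regular_at_for_def
proof (intro conjI ballI locally_lsc_at_g assms)
  show "\<bar>g x\<bar> \<noteq> \<infinity>" using assms by (simp add: g_finite_iff)
  fix vb
  obtain e where "e > 0" and near: "\<And>x' x'' v. v \<in> limiting_subdiff g x' \<Longrightarrow> norm (v - vb) < e \<Longrightarrow>
      norm (x' - x) < e \<Longrightarrow> g x' < g x + ereal e \<Longrightarrow> norm (x'' - x) \<le> e \<Longrightarrow>
      g x' + ereal (inner v (x'' - x')) \<le> g x''"
    using limiting_subdiff_g_inequality_near[OF assms] by blast
  show "\<exists>r\<ge>0. \<exists>e>0. \<forall>x' x'' v. v \<in> limiting_subdiff g x' \<and> norm (v - vb) < e \<and>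
      norm (x' - x) < e \<and> g x' < g x + ereal e \<and> norm (x'' - x) \<le> e \<longrightarrow>
      g x' + ereal (inner v (x'' - x') - r / 2 * (norm (x'' - x'))\<^sup>2) \<le> g x''"
    using \<open>e > 0\<close> near by (intro exI[of _ 0] exI[of _ e]) auto
qed

end

theorem lemma3p1:
  fixes f :: "real ^ 'n \<Rightarrow> real"
    and gradf :: "real ^ 'n \<Rightarrow> real ^ 'n"
    and hessf :: "real ^ 'n \<Rightarrow> ((real ^ 'n) \<Rightarrow>\<^sub>L (real ^ 'n))"
    and B :: "real ^ 'n ^ 'p"
    and lam1 lam2 :: real
    and l u :: "real ^ 'n"
    and \<Omega> :: "(real ^ 'n) set"
    and g F :: "real ^ 'n \<Rightarrow> ereal"
  assumes grad: "\<And>x. (f has_derivative (\<lambda>h. inner (gradf x) h)) (at x)"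
    and hess: "\<And>x. (gradf has_derivative blinfun_apply (hessf x)) (at x)"
    and hess_cont: "continuous_on UNIV hessf"
    and hl1: "lam1 > 0" and hl2: "lam2 > 0"
    and lu: "\<And>i. l $ i \<le> 0 \<and> 0 \<le> u $ i"
    and Omega: "\<Omega> = {x. \<forall>i. l $ i \<le> x $ i \<and> x $ i \<le> u $ i}"
    and g_def: "\<And>x. g x = (if x \<in> \<Omega> then ereal (lam1 * l0 (B *v x) + lam2 * l0 x) else \<infinity>)"
    and F_def: "\<And>x. F x = ereal (f x) + g x"
  shows "(\<forall>x\<in>\<Omega>. prox_regular_at g x) \<and>
         {x. 0 \<in> limiting_subdiff F x} = {x. L_stationary gradf g x}"
proof -
  interpret l0_box_penalty B lam1 lam2 l u \<Omega> g
    using hl1 hl2 lu Omega g_def by unfold_locales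
  have gradf_cont: "isCont gradf x" for x
    using hess by (rule has_derivative_continuous)
  have "0 \<in> limiting_subdiff F x \<longleftrightarrow> L_stationary gradf g x" for x
  proof -
    have "F = (\<lambda>y. ereal (f y) + g y)" using F_def by auto
    then have "0 \<in> limiting_subdiff F x \<longleftrightarrow> - gradf x \<in> limiting_subdiff g x"
      using limiting_subdiff_add_C1[OF grad gradf_cont] by simp
    also have "\<dots> \<longleftrightarrow> L_stationary gradf g x"
      by (simp add: limiting_subdiff_g_eq_global_prox_subdiff L_stationary_iff_global_prox_subdiff)
    finally show ?thesis .
  qed
  then show ?thesis using prox_regular_at_g by auto
qed

end
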